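(* Let $\Omega$ be a compact subset of a Euclidean space and let $\phi$ satisfy condition (A1) below. Then for every $\mu\in M(\Omega)$, \[ \phi\big(\|\mu\|_{M(\Omega)}\big)\le\Phi(\mu)\le\|\mu\|_{M(\Omega)}. \]
   Context: $M(\Omega)$ is the space of signed Borel measures on $\Omega$ of bounded total variation, with total variation norm $\|\mu\|_{M(\Omega)}$ and total variation measure $|\mu|$. With $\operatorname{atom}(\mu)=\{\omega:\mu(\{\omega\})\ne0\}$, $\Phi(\mu)=|\mu|(\Omega\setminus\operatorname{atom}(\mu))+\sum_{\omega\in\operatorname{atom}(\mu)}\phi(|\mu|(\{\omega\}))$. Condition (A1): $\phi\colon[0,\infty)\to[0,\infty)$ is differentiable, concave, nondecreasing, $\phi(0)=0$, $\phi'(0)=1$, $\phi(z)\to+\infty$ as $z\to\infty$, and there is $\gamma\ge0$ with $0\le\phi'(z_1)-\phi'(z_2)\le\gamma(z_2-z_1)$ for all $0\le z_1\le z_2$. *)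

theory Defs
  imports "HOL-Analysis.Analysis"
begin

definition borel_on :: "'a::euclidean_space set \<Rightarrow> 'a set set" where
  "borel_on \<Omega> = {A. A \<in> sets borel \<and> A \<subseteq> \<Omega>}"

text \<open>A (real-valued, hence finite) signed Borel measure on \<Omega>: a countably additive
  set function on the Borel subsets of \<Omega>.  Only its values on borel_on \<Omega> matter.\<close>
definition signed_measure_on :: "'a::euclidean_space set \<Rightarrow> ('a set \<Rightarrow> real) \<Rightarrow> bool" where
  "signed_measure_on \<Omega> \<mu> \<longleftrightarrow>
     \<mu> {} = 0 \<and>
     (\<forall>A::nat \<Rightarrow> 'a set. range A \<subseteq> borel_on \<Omega> \<and> disjoint_family A \<longrightarrow>
        (\<lambda>i. \<mu> (A i)) sums \<mu> (\<Union>i. A i))"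

definition tv_partition_sums :: "'a::euclidean_space set \<Rightarrow> ('a set \<Rightarrow> real) \<Rightarrow> 'a set \<Rightarrow> real set" where
  "tv_partition_sums \<Omega> \<mu> E =
     {\<Sum>B\<in>P. \<bar>\<mu> B\<bar> | P. finite P \<and> disjoint P \<and> P \<subseteq> borel_on \<Omega> \<and> \<Union>P = E}"

definition total_variation :: "'a::euclidean_space set \<Rightarrow> ('a set \<Rightarrow> real) \<Rightarrow> 'a set \<Rightarrow> real" where
  "total_variation \<Omega> \<mu> E = Sup (tv_partition_sums \<Omega> \<mu> E)"

definition measures_M :: "'a::euclidean_space set \<Rightarrow> ('a set \<Rightarrow> real) set" where
  "measures_M \<Omega> = {\<mu>. signed_measure_on \<Omega> \<mu> \<and> bdd_above (tv_partition_sums \<Omega> \<mu> \<Omega>)}"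

definition M_norm :: "'a::euclidean_space set \<Rightarrow> ('a set \<Rightarrow> real) \<Rightarrow> real" where
  "M_norm \<Omega> \<mu> = total_variation \<Omega> \<mu> \<Omega>"

definition atoms :: "'a::euclidean_space set \<Rightarrow> ('a set \<Rightarrow> real) \<Rightarrow> 'a set" where
  "atoms \<Omega> \<mu> = {\<omega> \<in> \<Omega>. \<mu> {\<omega>} \<noteq> 0}"

definition Phi :: "(real \<Rightarrow> real) \<Rightarrow> 'a::euclidean_space set \<Rightarrow> ('a set \<Rightarrow> real) \<Rightarrow> real" where
  "Phi \<phi> \<Omega> \<mu> =
     total_variation \<Omega> \<mu> (\<Omega> - atoms \<Omega> \<mu>)
     + (\<Sum>\<^sub>\<infinity>\<omega>\<in>atoms \<Omega> \<mu>. \<phi> (total_variation \<Omega> \<mu> {\<omega>}))"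

definition cond_A1 :: "(real \<Rightarrow> real) \<Rightarrow> bool" where
  "cond_A1 \<phi> \<longleftrightarrow>
     (\<exists>\<phi>' \<gamma>. (\<forall>z\<ge>0. (\<phi> has_real_derivative \<phi>' z) (at z within {0..}))
        \<and> \<phi>' 0 = 1 \<and> \<gamma> \<ge> 0
        \<and> (\<forall>z1 z2. 0 \<le> z1 \<and> z1 \<le> z2 \<longrightarrow>
              0 \<le> \<phi>' z1 - \<phi>' z2 \<and> \<phi>' z1 - \<phi>' z2 \<le> \<gamma> * (z2 - z1)))
     \<and> (\<forall>z\<ge>0. \<phi> z \<ge> 0)
     \<and> concave_on {0..} \<phi>
     \<and> mono_on {0..} \<phi>
     \<and> \<phi> 0 = 0
     \<and> filterlim \<phi> at_top at_top"

end

theory Submission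
  imports Defs
begin

text \<open>Only finitely many atoms carry mass at least \<open>1/n\<close>, so the set \<open>A\<close> of atoms is
  countable. With \<open>a = |\<mu>|(\<Omega> - A)\<close> and \<open>b \<omega> = |\<mu>({\<omega>})|\<close>, additivity of \<open>|\<mu>|\<close> and countable
  additivity of \<mu> on \<open>A\<close> give \<open>\<parallel>\<mu>\<parallel> = a + (\<Sum>\<omega>\<in>A. b \<omega>)\<close>, while \<open>\<Phi>(\<mu>) = a + (\<Sum>\<omega>\<in>A. \<phi> (b \<omega>))\<close>.
  Since \<open>\<phi>' \<le> \<phi>'(0) = 1\<close>, the mean value theorem gives \<open>\<phi>(x + d) \<le> \<phi>(x) + d\<close>, in particular
  \<open>\<phi>(z) \<le> z\<close>, which yields \<open>\<Phi>(\<mu>) \<le> \<parallel>\<mu>\<parallel>\<close>. Concavity and \<open>\<phi>(0) = 0\<close> make \<phi> subadditive, so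
  \<open>\<phi>(a + \<Sum>\<omega>\<in>F. b \<omega>) \<le> \<phi>(a) + (\<Sum>\<omega>\<in>F. \<phi> (b \<omega>))\<close> for finite \<open>F \<subseteq> A\<close>; the bound
  \<open>\<phi>(x + d) \<le> \<phi>(x) + d\<close> carries this over to the countable sum, and \<open>\<phi>(a) \<le> a\<close> finishes
  \<open>\<phi>(\<parallel>\<mu>\<parallel>) \<le> \<Phi>(\<mu>)\<close>.\<close>

section \<open>Condition (A1)\<close>

lemma concave_on_subadditive:
  fixes f :: "real \<Rightarrow> real"
  assumes concave: "concave_on {0..} f" and f0: "0 \<le> f 0" and x: "0 \<le> x" and y: "0 \<le> y"
  shows "f (x + y) \<le> f x + f y"
proof (cases "x + y = 0")
  case True
  then have "x = 0" "y = 0" using x y by auto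
  then show ?thesis using f0 by simp
next
  case False
  then have s: "0 < x + y" using x y by simp
  have below_chord: "u / (x + y) * f (x + y) \<le> f u" if "0 \<le> u" "u \<le> x + y" for u
  proof -
    have "(1 - u / (x + y)) * f 0 + u / (x + y) * f (x + y)
        \<le> f ((1 - u / (x + y)) *\<^sub>R 0 + (u / (x + y)) *\<^sub>R (x + y))"
      by (rule concave_onD[OF concave]) (use that s in auto)
    moreover have "0 \<le> (1 - u / (x + y)) * f 0" using that s f0 by simp
    ultimately show ?thesis using s by simp
  qed
  have "x / (x + y) + y / (x + y) = 1"
    using s by (simp add: add_divide_distrib[symmetric])
  then have "f (x + y) = x / (x + y) * f (x + y) + y / (x + y) * f (x + y)"
    by (metis distrib_right mult_1)
  also have "\<dots> \<le> f x + f y"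
    using below_chord[of x] below_chord[of y] x y by simp
  finally show ?thesis .
qed

lemma concave_on_add_sum_le:
  fixes f :: "real \<Rightarrow> real"
  assumes concave: "concave_on {0..} f" and f0: "0 \<le> f 0" and a: "0 \<le> a"
    and "finite F" and "\<And>w. w \<in> F \<Longrightarrow> 0 \<le> b w"
  shows "f (a + sum b F) \<le> f a + (\<Sum>w\<in>F. f (b w))"
  using \<open>finite F\<close> \<open>\<And>w. w \<in> F \<Longrightarrow> 0 \<le> b w\<close>
proof (induction F rule: finite_induct)
  case empty
  then show ?case by simp
next
  case (insert w F)
  have "0 \<le> sum b F" using insert.prems by (intro sum_nonneg) auto
  then have "f (a + sum b F + b w) \<le> f (a + sum b F) + f (b w)"
    using concave_on_subadditive[OF concave f0] a insert.prems by simp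
  then show ?case using insert by (simp add: add_ac)
qed

lemma increment_le_of_deriv_le_one:
  fixes f :: "real \<Rightarrow> real"
  assumes deriv: "\<And>z. 0 \<le> z \<Longrightarrow> (f has_real_derivative f' z) (at z within {0..})"
    and le_one: "\<And>z. 0 \<le> z \<Longrightarrow> f' z \<le> 1" and x: "0 \<le> x" and d: "0 \<le> d"
  shows "f (x + d) \<le> f x + d"
proof -
  have "\<exists>z\<in>{x..x+d}. f (x + d) - f x = (\<lambda>h. f' z * h) (x + d - x)"
  proof (rule mvt_very_simple)
    fix z assume "x \<le> z" "z \<le> x + d"
    then have "(f has_real_derivative f' z) (at z within {x..x+d})"
      using x by (intro DERIV_subset[OF deriv]) auto
    then show "(f has_derivative (\<lambda>h. f' z * h)) (at z within {x..x+d})"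
      by (simp add: has_field_derivative_def)
  qed (use d in simp)
  then obtain z where z: "x \<le> z" "f (x + d) - f x = f' z * d" by auto
  have "f' z * d \<le> d" using mult_right_mono[OF le_one d] z x by simp
  then show ?thesis using z by simp
qed

lemma cond_A1_zero: "cond_A1 \<phi> \<Longrightarrow> \<phi> 0 = 0"
  unfolding cond_A1_def by (elim conjE)

lemma cond_A1_nonneg: "cond_A1 \<phi> \<Longrightarrow> 0 \<le> z \<Longrightarrow> 0 \<le> \<phi> z"
  unfolding cond_A1_def by (elim conjE allE impE)

lemma cond_A1_concave: "cond_A1 \<phi> \<Longrightarrow> concave_on {0..} \<phi>"
  unfolding cond_A1_def by (elim conjE)

lemma cond_A1_increment_le:
  assumes A1: "cond_A1 \<phi>" and "0 \<le> x" "0 \<le> d"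
  shows "\<phi> (x + d) \<le> \<phi> x + d"
proof -
  obtain \<phi>' \<gamma> where deriv: "\<forall>z\<ge>0. (\<phi> has_real_derivative \<phi>' z) (at z within {0..})"
    and "\<phi>' 0 = 1"
    and antimono: "\<forall>z1 z2. 0 \<le> z1 \<and> z1 \<le> z2 \<longrightarrow>
              0 \<le> \<phi>' z1 - \<phi>' z2 \<and> \<phi>' z1 - \<phi>' z2 \<le> \<gamma> * (z2 - z1)"
    using A1 unfolding cond_A1_def by (elim conjE exE) blast
  have "\<phi>' z \<le> 1" if "0 \<le> z" for z
    using antimono[rule_format, of 0 z] \<open>\<phi>' 0 = 1\<close> that by simp
  then show ?thesis
    using increment_le_of_deriv_le_one[of \<phi> \<phi>'] deriv assms(2,3) by blast
qed

lemma cond_A1_le_self: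
  assumes "cond_A1 \<phi>" and "0 \<le> z"
  shows "\<phi> z \<le> z"
  using cond_A1_increment_le[OF assms(1) order_refl assms(2)] cond_A1_zero[OF assms(1)]
  by simp

lemma cond_A1_summable_on_comp:
  fixes b :: "'b \<Rightarrow> real"
  assumes "cond_A1 \<phi>" and "b summable_on A" and "\<And>w. w \<in> A \<Longrightarrow> 0 \<le> b w"
  shows "(\<lambda>w. \<phi> (b w)) summable_on A"
proof (rule summable_on_comparison_test[OF assms(2)])
  fix w assume "w \<in> A"
  then show "\<phi> (b w) \<le> b w" "0 \<le> \<phi> (b w)"
    using cond_A1_le_self[OF assms(1)] cond_A1_nonneg[OF assms(1)] assms(3) by auto
qed

lemma cond_A1_infsum_comp_le:
  fixes b :: "'b \<Rightarrow> real"
  assumes "cond_A1 \<phi>" and "b summable_on A" and "\<And>w. w \<in> A \<Longrightarrow> 0 \<le> b w"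
  shows "infsum (\<lambda>w. \<phi> (b w)) A \<le> infsum b A"
  using cond_A1_le_self[OF assms(1)] assms(3)
  by (intro infsum_mono[OF cond_A1_summable_on_comp[OF assms] assms(2)]) auto

lemma cond_A1_add_infsum_le:
  fixes b :: "'b \<Rightarrow> real"
  assumes A1: "cond_A1 \<phi>" and a: "0 \<le> a" and summable: "b summable_on A"
    and b: "\<And>w. w \<in> A \<Longrightarrow> 0 \<le> b w"
  shows "\<phi> (a + infsum b A) \<le> \<phi> a + infsum (\<lambda>w. \<phi> (b w)) A"
proof (rule field_le_epsilon)
  fix e :: real assume "0 < e"
  then obtain F where F: "finite F" "F \<subseteq> A" "dist (sum b F) (infsum b A) \<le> e"
    using infsum_finite_approximation[OF summable] by blast
  have "sum b F \<le> infsum b A" using finite_sum_le_infsum[OF summable F(1,2)] b by blast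
  then have tail: "0 \<le> infsum b A - sum b F" "infsum b A - sum b F \<le> e"
    using F(3) by (auto simp: dist_real_def)
  have "0 \<le> sum b F" using F(2) b by (intro sum_nonneg) auto
  have "\<phi> (a + infsum b A) = \<phi> ((a + sum b F) + (infsum b A - sum b F))" by simp
  also have "\<dots> \<le> \<phi> (a + sum b F) + (infsum b A - sum b F)"
    using cond_A1_increment_le[OF A1, of "a + sum b F" "infsum b A - sum b F"]
      a \<open>0 \<le> sum b F\<close> tail(1) by simp
  also have "\<phi> (a + sum b F) \<le> \<phi> a + (\<Sum>w\<in>F. \<phi> (b w))"
    using concave_on_add_sum_le[OF cond_A1_concave[OF A1] _ a F(1)] cond_A1_zero[OF A1] b F(2)
    by auto
  also have "(\<Sum>w\<in>F. \<phi> (b w)) \<le> infsum (\<lambda>w. \<phi> (b w)) A"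
    using finite_sum_le_infsum[OF cond_A1_summable_on_comp[OF A1 summable b] F(1,2)]
      cond_A1_nonneg[OF A1] b F(2) by blast
  finally show "\<phi> (a + infsum b A) \<le> \<phi> a + infsum (\<lambda>w. \<phi> (b w)) A + e"
    using tail(2) by linarith
qed

section \<open>Total variation\<close>

lemma borel_on_countable: "countable C \<Longrightarrow> C \<subseteq> \<Omega> \<Longrightarrow> C \<in> borel_on \<Omega>"
  unfolding borel_on_def by (auto intro: sets.countable)

lemma borel_on_Diff: "A \<in> borel_on \<Omega> \<Longrightarrow> B \<in> borel_on \<Omega> \<Longrightarrow> A - B \<in> borel_on \<Omega>"
  unfolding borel_on_def by auto

lemma borel_on_Int: "A \<in> borel_on \<Omega> \<Longrightarrow> B \<in> borel_on \<Omega> \<Longrightarrow> A \<inter> B \<in> borel_on \<Omega>"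
  unfolding borel_on_def by auto

lemma sum_abs_Un_disjoint_Unions:
  fixes \<mu> :: "'a set \<Rightarrow> real"
  assumes "finite P" "finite Q" "\<Union>P \<inter> \<Union>Q = {}" "\<mu> {} = 0"
  shows "(\<Sum>B\<in>P \<union> Q. \<bar>\<mu> B\<bar>) = (\<Sum>B\<in>P. \<bar>\<mu> B\<bar>) + (\<Sum>B\<in>Q. \<bar>\<mu> B\<bar>)"
proof -
  have "B = {}" if "B \<in> P \<inter> Q" for B
    using that assms(3) by blast
  then have "(\<Sum>B\<in>P \<inter> Q. \<bar>\<mu> B\<bar>) = 0"
    using assms(4) by (intro sum.neutral) auto
  then show ?thesis
    using sum_Un[OF assms(1,2), of "\<lambda>B. \<bar>\<mu> B\<bar>"] by simp
qed

lemma signed_measure_on_empty: "signed_measure_on \<Omega> \<mu> \<Longrightarrow> \<mu> {} = 0"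
  unfolding signed_measure_on_def by (elim conjE)

lemma signed_measure_on_Un:
  assumes sm: "signed_measure_on \<Omega> \<mu>" and "B \<in> borel_on \<Omega>" "C \<in> borel_on \<Omega>" "B \<inter> C = {}"
  shows "\<mu> (B \<union> C) = \<mu> B + \<mu> C"
proof -
  define S where "S i = (if i = 0 then B else if i = 1 then C else {})" for i :: nat
  have "range S \<subseteq> borel_on \<Omega>" "disjoint_family S"
    using assms by (auto simp: S_def borel_on_def disjoint_family_on_def)
  then have "(\<lambda>i. \<mu> (S i)) sums \<mu> (\<Union>i. S i)"
    using sm unfolding signed_measure_on_def by blast
  moreover have "(\<Union>i. S i) = B \<union> C"
    using UN_upper[of 0 UNIV S] UN_upper[of 1 UNIV S] by (auto simp: S_def split: if_splits)
  moreover have "(\<lambda>i. \<mu> (S i)) sums (\<Sum>i\<in>{0, 1}. \<mu> (S i))"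
    using signed_measure_on_empty[OF sm] by (intro sums_finite) (auto simp: S_def)
  ultimately show ?thesis
    by (simp add: S_def sums_iff)
qed

lemma signed_measure_on_finite:
  assumes sm: "signed_measure_on \<Omega> \<mu>" and "finite C" "C \<subseteq> \<Omega>"
  shows "\<mu> C = (\<Sum>\<omega>\<in>C. \<mu> {\<omega>})"
  using \<open>finite C\<close> \<open>C \<subseteq> \<Omega>\<close>
proof (induction C rule: finite_induct)
  case empty
  then show ?case using signed_measure_on_empty[OF sm] by simp
next
  case (insert \<omega> C)
  have "\<mu> ({\<omega>} \<union> C) = \<mu> {\<omega>} + \<mu> C"
    using insert by (intro signed_measure_on_Un[OF sm] borel_on_countable) (auto intro: countable_finite)
  then show ?case using insert by simp
qed

lemma signed_measure_on_countable_abs_le: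
  assumes sm: "signed_measure_on \<Omega> \<mu>" and C: "countable C" "C \<subseteq> \<Omega>"
    and summable: "(\<lambda>\<omega>. \<bar>\<mu> {\<omega>}\<bar>) summable_on C"
  shows "\<bar>\<mu> C\<bar> \<le> infsum (\<lambda>\<omega>. \<bar>\<mu> {\<omega>}\<bar>) C"
proof (cases "finite C")
  case True
  then show ?thesis
    using signed_measure_on_finite[OF sm True C(2)] sum_abs[of "\<lambda>\<omega>. \<mu> {\<omega>}" C] by simp
next
  case False
  define e where "e = from_nat_into C"
  have e: "bij_betw e UNIV C"
    unfolding e_def using bij_betw_from_nat_into C(1) False by blast
  have "range (\<lambda>i. {e i}) \<subseteq> borel_on \<Omega>" "disjoint_family (\<lambda>i. {e i})"
    using e C(2) by (auto simp: bij_betw_def inj_on_def disjoint_family_on_def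
        intro!: borel_on_countable)
  then have "(\<lambda>i. \<mu> {e i}) sums \<mu> (\<Union>i. {e i})"
    using sm unfolding signed_measure_on_def by blast
  moreover have "(\<Union>i. {e i}) = C"
    using e by (auto simp: bij_betw_def)
  ultimately have "\<mu> C = (\<Sum>i. \<mu> {e i})"
    by (simp add: sums_iff)
  moreover have summable_e: "(\<lambda>i. \<bar>\<mu> {e i}\<bar>) summable_on UNIV"
    using summable_on_reindex_bij_betw[OF e, of "\<lambda>\<omega>. \<bar>\<mu> {\<omega>}\<bar>"] summable by simp
  then have "summable (\<lambda>i. \<bar>\<mu> {e i}\<bar>)"
    by (subst summable_on_UNIV_nonneg_real_iff[symmetric]) auto
  moreover have "(\<Sum>i. \<bar>\<mu> {e i}\<bar>) = infsum (\<lambda>\<omega>. \<bar>\<mu> {\<omega>}\<bar>) C"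
    using has_sum_imp_sums[OF has_sum_infsum[OF summable_e]] infsum_reindex_bij_betw[OF e]
    by (simp add: sums_iff)
  ultimately show ?thesis
    using summable_rabs by metis
qed

lemma measures_M_signed_measure_on: "\<mu> \<in> measures_M \<Omega> \<Longrightarrow> signed_measure_on \<Omega> \<mu>"
  unfolding measures_M_def by simp

lemma measures_M_empty: "\<mu> \<in> measures_M \<Omega> \<Longrightarrow> \<mu> {} = 0"
  by (intro signed_measure_on_empty measures_M_signed_measure_on)

lemma total_variation_least:
  assumes "E \<in> borel_on \<Omega>"
    and "\<And>P. finite P \<Longrightarrow> disjoint P \<Longrightarrow> P \<subseteq> borel_on \<Omega> \<Longrightarrow> \<Union>P = E \<Longrightarrow>
      (\<Sum>B\<in>P. \<bar>\<mu> B\<bar>) \<le> c"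
  shows "total_variation \<Omega> \<mu> E \<le> c"
  unfolding total_variation_def
proof (rule cSup_least)
  show "tv_partition_sums \<Omega> \<mu> E \<noteq> {}"
    using assms(1) unfolding tv_partition_sums_def by (auto intro!: exI[of _ "{E}"])
qed (use assms(2) in \<open>auto simp: tv_partition_sums_def\<close>)

context
  fixes \<Omega> :: "'a::euclidean_space set" and \<mu> :: "'a set \<Rightarrow> real"
  assumes M: "\<mu> \<in> measures_M \<Omega>" and borel_\<Omega>: "\<Omega> \<in> sets borel"
begin

lemma bdd_above_tv_partition_sums:
  assumes E: "E \<in> borel_on \<Omega>"
  shows "bdd_above (tv_partition_sums \<Omega> \<mu> E)"
proof -
  obtain K where K: "\<And>y. y \<in> tv_partition_sums \<Omega> \<mu> \<Omega> \<Longrightarrow> y \<le> K"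
    using M unfolding measures_M_def bdd_above_def by blast
  have "(\<Sum>B\<in>P. \<bar>\<mu> B\<bar>) \<le> K"
    if P: "finite P" "disjoint P" "P \<subseteq> borel_on \<Omega>" "\<Union>P = E" for P
  proof -
    have "E \<subseteq> \<Omega>" and "\<Omega> - E \<in> borel_on \<Omega>"
      using E borel_\<Omega> by (auto simp: borel_on_def)
    moreover have "disjoint (P \<union> {\<Omega> - E})"
      using P by (intro disjoint_union) auto
    ultimately have "(\<Sum>B\<in>P \<union> {\<Omega> - E}. \<bar>\<mu> B\<bar>) \<in> tv_partition_sums \<Omega> \<mu> \<Omega>"
      using P unfolding tv_partition_sums_def by blast
    moreover have "(\<Sum>B\<in>P \<union> {\<Omega> - E}. \<bar>\<mu> B\<bar>) = (\<Sum>B\<in>P. \<bar>\<mu> B\<bar>) + \<bar>\<mu> (\<Omega> - E)\<bar>"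
      using P measures_M_empty[OF M] by (subst sum_abs_Un_disjoint_Unions) auto
    ultimately show ?thesis
      using K by fastforce
  qed
  then show ?thesis
    unfolding bdd_above_def tv_partition_sums_def by blast
qed

lemma partition_sum_le_total_variation:
  assumes "finite P" "disjoint P" "P \<subseteq> borel_on \<Omega>"
  shows "(\<Sum>B\<in>P. \<bar>\<mu> B\<bar>) \<le> total_variation \<Omega> \<mu> (\<Union>P)"
proof -
  have "\<Union>P \<in> borel_on \<Omega>"
    using assms unfolding borel_on_def by auto
  then show ?thesis
    unfolding total_variation_def
    using assms bdd_above_tv_partition_sums
    by (intro cSup_upper) (auto simp: tv_partition_sums_def)
qed

lemma total_variation_nonneg:
  assumes "E \<in> borel_on \<Omega>"
  shows "0 \<le> total_variation \<Omega> \<mu> E"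
  using partition_sum_le_total_variation[of "{E}"] assms by simp

lemma total_variation_Un_ge:
  assumes E1: "E1 \<in> borel_on \<Omega>" and E2: "E2 \<in> borel_on \<Omega>" and disj: "E1 \<inter> E2 = {}"
  shows "total_variation \<Omega> \<mu> E1 + total_variation \<Omega> \<mu> E2 \<le> total_variation \<Omega> \<mu> (E1 \<union> E2)"
proof -
  have "(\<Sum>B\<in>P1. \<bar>\<mu> B\<bar>) \<le> total_variation \<Omega> \<mu> (E1 \<union> E2) - total_variation \<Omega> \<mu> E2"
    if P1: "finite P1" "disjoint P1" "P1 \<subseteq> borel_on \<Omega>" "\<Union>P1 = E1" for P1
  proof -
    have "(\<Sum>B\<in>P2. \<bar>\<mu> B\<bar>) \<le> total_variation \<Omega> \<mu> (E1 \<union> E2) - (\<Sum>B\<in>P1. \<bar>\<mu> B\<bar>)"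
      if P2: "finite P2" "disjoint P2" "P2 \<subseteq> borel_on \<Omega>" "\<Union>P2 = E2" for P2
    proof -
      have "(\<Sum>B\<in>P1 \<union> P2. \<bar>\<mu> B\<bar>) \<le> total_variation \<Omega> \<mu> (\<Union>(P1 \<union> P2))"
        using P1 P2 disj by (intro partition_sum_le_total_variation disjoint_union) auto
      moreover have "(\<Sum>B\<in>P1 \<union> P2. \<bar>\<mu> B\<bar>) = (\<Sum>B\<in>P1. \<bar>\<mu> B\<bar>) + (\<Sum>B\<in>P2. \<bar>\<mu> B\<bar>)"
        using P1 P2 disj measures_M_empty[OF M] by (intro sum_abs_Un_disjoint_Unions) auto
      ultimately show ?thesis
        using P1(4) P2(4) by simp
    qed
    then have "total_variation \<Omega> \<mu> E2 \<le> total_variation \<Omega> \<mu> (E1 \<union> E2) - (\<Sum>B\<in>P1. \<bar>\<mu> B\<bar>)"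
      by (intro total_variation_least[OF E2])
    then show ?thesis by simp
  qed
  then have "total_variation \<Omega> \<mu> E1 \<le> total_variation \<Omega> \<mu> (E1 \<union> E2) - total_variation \<Omega> \<mu> E2"
    by (intro total_variation_least[OF E1])
  then show ?thesis by simp
qed

lemma sum_Int_le_total_variation:
  assumes P: "finite P" "disjoint P" "P \<subseteq> borel_on \<Omega>" and F: "F \<in> borel_on \<Omega>"
  shows "(\<Sum>B\<in>P. \<bar>\<mu> (B \<inter> F)\<bar>) \<le> total_variation \<Omega> \<mu> (\<Union>P \<inter> F)"
proof -
  have "(\<Sum>C\<in>(\<lambda>B. B \<inter> F) ` P. \<bar>\<mu> C\<bar>) = (\<Sum>B\<in>P. \<bar>\<mu> (B \<inter> F)\<bar>)"
  proof (subst sum.reindex_nontrivial[OF P(1)])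
    fix B B' assume "B \<in> P" "B' \<in> P" "B \<noteq> B'" "B \<inter> F = B' \<inter> F"
    then have "B \<inter> F = {}"
      using P(2) unfolding pairwise_def disjnt_def by blast
    then show "\<bar>\<mu> (B \<inter> F)\<bar> = 0"
      using measures_M_empty[OF M] by simp
  qed simp
  moreover have "(\<Sum>C\<in>(\<lambda>B. B \<inter> F) ` P. \<bar>\<mu> C\<bar>) \<le> total_variation \<Omega> \<mu> (\<Union>((\<lambda>B. B \<inter> F) ` P))"
    using P F by (intro partition_sum_le_total_variation)
      (auto simp: pairwise_def disjnt_def intro: borel_on_Int)
  moreover have "\<Union>((\<lambda>B. B \<inter> F) ` P) = \<Union>P \<inter> F"
    by blast
  ultimately show ?thesis by simp
qed

lemma total_variation_Un_le:
  assumes E1: "E1 \<in> borel_on \<Omega>" and E2: "E2 \<in> borel_on \<Omega>" and disj: "E1 \<inter> E2 = {}"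
  shows "total_variation \<Omega> \<mu> (E1 \<union> E2) \<le> total_variation \<Omega> \<mu> E1 + total_variation \<Omega> \<mu> E2"
proof (rule total_variation_least)
  show "E1 \<union> E2 \<in> borel_on \<Omega>"
    using E1 E2 by (auto simp: borel_on_def)
  fix P assume P: "finite P" "disjoint P" "P \<subseteq> borel_on \<Omega>" "\<Union>P = E1 \<union> E2"
  have "\<bar>\<mu> B\<bar> \<le> \<bar>\<mu> (B \<inter> E1)\<bar> + \<bar>\<mu> (B \<inter> E2)\<bar>" if "B \<in> P" for B
  proof -
    have "\<mu> ((B \<inter> E1) \<union> (B \<inter> E2)) = \<mu> (B \<inter> E1) + \<mu> (B \<inter> E2)"
      using that P(3) E1 E2 disj
      by (intro signed_measure_on_Un[OF measures_M_signed_measure_on[OF M]] borel_on_Int) auto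
    moreover have "(B \<inter> E1) \<union> (B \<inter> E2) = B"
      using that P(4) by blast
    ultimately show ?thesis by simp
  qed
  then have "(\<Sum>B\<in>P. \<bar>\<mu> B\<bar>) \<le> (\<Sum>B\<in>P. \<bar>\<mu> (B \<inter> E1)\<bar>) + (\<Sum>B\<in>P. \<bar>\<mu> (B \<inter> E2)\<bar>)"
    by (simp add: sum.distrib[symmetric] sum_mono)
  also have "\<dots> \<le> total_variation \<Omega> \<mu> (\<Union>P \<inter> E1) + total_variation \<Omega> \<mu> (\<Union>P \<inter> E2)"
    using sum_Int_le_total_variation[OF P(1-3)] E1 E2 by (intro add_mono)
  also have "\<dots> = total_variation \<Omega> \<mu> E1 + total_variation \<Omega> \<mu> E2"
    using P(4) disj by (simp add: Int_absorb1 Int_Un_distrib2 Int_commute)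
  finally show "(\<Sum>B\<in>P. \<bar>\<mu> B\<bar>) \<le> total_variation \<Omega> \<mu> E1 + total_variation \<Omega> \<mu> E2" .
qed

lemma total_variation_Un:
  assumes "E1 \<in> borel_on \<Omega>" "E2 \<in> borel_on \<Omega>" "E1 \<inter> E2 = {}"
  shows "total_variation \<Omega> \<mu> (E1 \<union> E2) = total_variation \<Omega> \<mu> E1 + total_variation \<Omega> \<mu> E2"
  using total_variation_Un_le[OF assms] total_variation_Un_ge[OF assms] by linarith

lemma total_variation_mono:
  assumes F: "F \<in> borel_on \<Omega>" and E: "E \<in> borel_on \<Omega>" and "F \<subseteq> E"
  shows "total_variation \<Omega> \<mu> F \<le> total_variation \<Omega> \<mu> E"
proof -
  have "F \<union> (E - F) = E"
    using \<open>F \<subseteq> E\<close> by blast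
  then have "total_variation \<Omega> \<mu> E = total_variation \<Omega> \<mu> F + total_variation \<Omega> \<mu> (E - F)"
    using total_variation_Un[OF F borel_on_Diff[OF E F]] by simp
  moreover have "0 \<le> total_variation \<Omega> \<mu> (E - F)"
    using borel_on_Diff[OF E F] by (rule total_variation_nonneg)
  ultimately show ?thesis by simp
qed

lemma sum_singletons_le_total_variation:
  assumes E: "E \<in> borel_on \<Omega>" and F: "finite F" "F \<subseteq> E"
  shows "(\<Sum>\<omega>\<in>F. \<bar>\<mu> {\<omega>}\<bar>) \<le> total_variation \<Omega> \<mu> E"
proof -
  have "F \<subseteq> \<Omega>"
    using E F(2) by (auto simp: borel_on_def)
  then have F_borel: "F \<in> borel_on \<Omega>" and singletons: "(\<lambda>\<omega>. {\<omega>}) ` F \<subseteq> borel_on \<Omega>"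
    using F(1) by (auto intro!: borel_on_countable countable_finite)
  have "(\<Sum>\<omega>\<in>F. \<bar>\<mu> {\<omega>}\<bar>) = (\<Sum>B\<in>(\<lambda>\<omega>. {\<omega>}) ` F. \<bar>\<mu> B\<bar>)"
    by (simp add: sum.reindex)
  also have "\<dots> \<le> total_variation \<Omega> \<mu> (\<Union>((\<lambda>\<omega>. {\<omega>}) ` F))"
    using F singletons
    by (intro partition_sum_le_total_variation) (auto simp: pairwise_def disjnt_def)
  also have "\<Union>((\<lambda>\<omega>. {\<omega>}) ` F) = F"
    by blast
  also have "total_variation \<Omega> \<mu> F \<le> total_variation \<Omega> \<mu> E"
    using F_borel E F(2) by (rule total_variation_mono)
  finally show ?thesis .
qed

lemma countable_atoms: "countable (atoms \<Omega> \<mu>)"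
proof -
  define K where "K = total_variation \<Omega> \<mu> \<Omega>"
  define G where "G n = {\<omega> \<in> \<Omega>. inverse (real (Suc n)) \<le> \<bar>\<mu> {\<omega>}\<bar>}" for n
  have "finite (G n)" for n
  proof -
    have "card H \<le> nat \<lceil>K * real (Suc n)\<rceil>" if H: "H \<subseteq> G n" "finite H" for H
    proof -
      have "real (card H) * inverse (real (Suc n)) = (\<Sum>\<omega>\<in>H. inverse (real (Suc n)))"
        by simp
      also have "\<dots> \<le> (\<Sum>\<omega>\<in>H. \<bar>\<mu> {\<omega>}\<bar>)"
        using H by (intro sum_mono) (auto simp: G_def)
      also have "\<dots> \<le> K"
        unfolding K_def using H borel_\<Omega>
        by (intro sum_singletons_le_total_variation) (auto simp: G_def borel_on_def)
      finally have "real (card H) \<le> K * real (Suc n)"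
        by (simp add: field_simps)
      then show ?thesis by linarith
    qed
    then show ?thesis
      using finite_if_finite_subsets_card_bdd by blast
  qed
  moreover have "atoms \<Omega> \<mu> \<subseteq> (\<Union>n. G n)"
  proof
    fix \<omega> assume "\<omega> \<in> atoms \<Omega> \<mu>"
    then have \<omega>: "\<omega> \<in> \<Omega>" "0 < \<bar>\<mu> {\<omega>}\<bar>"
      by (auto simp: atoms_def)
    then obtain n where "inverse (real (Suc n)) < \<bar>\<mu> {\<omega>}\<bar>"
      using reals_Archimedean by blast
    then have "\<omega> \<in> G n"
      using \<omega> by (simp add: G_def)
    then show "\<omega> \<in> (\<Union>n. G n)" by blast
  qed
  ultimately show ?thesis
    by (meson countable_UN countable_finite countable_subset UNIV_I countableI_type)
qed

lemma summable_on_singletons: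
  assumes "E \<in> borel_on \<Omega>"
  shows "(\<lambda>\<omega>. \<bar>\<mu> {\<omega>}\<bar>) summable_on E"
  using sum_singletons_le_total_variation[OF assms]
  by (intro nonneg_bdd_above_summable_on) (auto simp: bdd_above_def)

lemma total_variation_countable:
  assumes "countable C" "C \<subseteq> \<Omega>"
  shows "total_variation \<Omega> \<mu> C = infsum (\<lambda>\<omega>. \<bar>\<mu> {\<omega>}\<bar>) C"
proof (rule antisym)
  have C: "C \<in> borel_on \<Omega>"
    using assms by (rule borel_on_countable)
  show "total_variation \<Omega> \<mu> C \<le> infsum (\<lambda>\<omega>. \<bar>\<mu> {\<omega>}\<bar>) C"
  proof (rule total_variation_least[OF C])
    fix P assume P: "finite P" "disjoint P" "P \<subseteq> borel_on \<Omega>" "\<Union>P = C"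
    have summable: "(\<lambda>\<omega>. \<bar>\<mu> {\<omega>}\<bar>) summable_on B" if "B \<in> P" for B
      using summable_on_subset[OF summable_on_singletons[OF C]] that P(4) by blast
    have "\<bar>\<mu> B\<bar> \<le> infsum (\<lambda>\<omega>. \<bar>\<mu> {\<omega>}\<bar>) B" if "B \<in> P" for B
      using that P(4) assms summable[OF that]
      by (intro signed_measure_on_countable_abs_le[OF measures_M_signed_measure_on[OF M]])
        (auto intro: countable_subset)
    then have "(\<Sum>B\<in>P. \<bar>\<mu> B\<bar>) \<le> (\<Sum>B\<in>P. infsum (\<lambda>\<omega>. \<bar>\<mu> {\<omega>}\<bar>) B)"
      by (rule sum_mono)
    also have "\<dots> = infsum (\<lambda>\<omega>. \<bar>\<mu> {\<omega>}\<bar>) (\<Union>P)"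
      using sum_infsum[OF P(1) summable, of id] P(2)
      by (simp add: pairwise_def disjnt_def)
    finally show "(\<Sum>B\<in>P. \<bar>\<mu> B\<bar>) \<le> infsum (\<lambda>\<omega>. \<bar>\<mu> {\<omega>}\<bar>) C"
      using P(4) by simp
  qed
  show "infsum (\<lambda>\<omega>. \<bar>\<mu> {\<omega>}\<bar>) C \<le> total_variation \<Omega> \<mu> C"
    using summable_on_singletons[OF C] sum_singletons_le_total_variation[OF C]
    by (intro infsum_le_finite_sums) auto
qed

lemma total_variation_singleton:
  assumes "\<omega> \<in> \<Omega>"
  shows "total_variation \<Omega> \<mu> {\<omega>} = \<bar>\<mu> {\<omega>}\<bar>"
  using total_variation_countable[of "{\<omega>}"] assms by simp

lemma atoms_borel_on: "atoms \<Omega> \<mu> \<in> borel_on \<Omega>"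
  using countable_atoms by (rule borel_on_countable) (auto simp: atoms_def)

lemma Diff_atoms_borel_on: "\<Omega> - atoms \<Omega> \<mu> \<in> borel_on \<Omega>"
  using borel_\<Omega> atoms_borel_on by (auto simp: borel_on_def)

lemma summable_on_atoms: "(\<lambda>\<omega>. \<bar>\<mu> {\<omega>}\<bar>) summable_on atoms \<Omega> \<mu>"
  using atoms_borel_on by (rule summable_on_singletons)

lemma M_norm_decompose_atoms:
  "M_norm \<Omega> \<mu> = total_variation \<Omega> \<mu> (\<Omega> - atoms \<Omega> \<mu>) + infsum (\<lambda>\<omega>. \<bar>\<mu> {\<omega>}\<bar>) (atoms \<Omega> \<mu>)"
proof -
  have "(\<Omega> - atoms \<Omega> \<mu>) \<union> atoms \<Omega> \<mu> = \<Omega>"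
    by (auto simp: atoms_def)
  then show ?thesis
    using total_variation_Un[OF Diff_atoms_borel_on atoms_borel_on]
      total_variation_countable[OF countable_atoms]
    by (auto simp: M_norm_def atoms_def)
qed

lemma Phi_decompose_atoms:
  "Phi \<phi> \<Omega> \<mu> = total_variation \<Omega> \<mu> (\<Omega> - atoms \<Omega> \<mu>)
    + infsum (\<lambda>\<omega>. \<phi> \<bar>\<mu> {\<omega>}\<bar>) (atoms \<Omega> \<mu>)"
  unfolding Phi_def using total_variation_singleton
  by (auto simp: atoms_def intro!: infsum_cong)

end

theorem lemmaA2:
  fixes \<Omega> :: "'a::euclidean_space set" and \<phi> :: "real \<Rightarrow> real" and \<mu> :: "'a set \<Rightarrow> real"
  assumes "compact \<Omega>"
    and "cond_A1 \<phi>"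
    and "\<mu> \<in> measures_M \<Omega>"
  shows "\<phi> (M_norm \<Omega> \<mu>) \<le> Phi \<phi> \<Omega> \<mu> \<and> Phi \<phi> \<Omega> \<mu> \<le> M_norm \<Omega> \<mu>"
proof -
  note A1 = assms(2) and M = assms(3)
  have borel_\<Omega>: "\<Omega> \<in> sets borel"
    using assms(1) by (intro borel_closed compact_imp_closed)
  define A where "A = atoms \<Omega> \<mu>"
  define a where "a = total_variation \<Omega> \<mu> (\<Omega> - A)"
  define b where "b = (\<lambda>\<omega>. \<bar>\<mu> {\<omega>}\<bar>)"
  have norm: "M_norm \<Omega> \<mu> = a + infsum b A"
    using M_norm_decompose_atoms[OF M borel_\<Omega>] by (simp add: A_def a_def b_def)
  have Phi: "Phi \<phi> \<Omega> \<mu> = a + infsum (\<lambda>\<omega>. \<phi> (b \<omega>)) A"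
    using Phi_decompose_atoms[OF M borel_\<Omega>] by (simp add: A_def a_def b_def)
  have b_summable: "b summable_on A"
    using summable_on_atoms[OF M borel_\<Omega>] by (simp add: A_def b_def)
  have "0 \<le> a"
    unfolding a_def A_def by (intro total_variation_nonneg Diff_atoms_borel_on M borel_\<Omega>)
  have "\<phi> (M_norm \<Omega> \<mu>) \<le> \<phi> a + infsum (\<lambda>\<omega>. \<phi> (b \<omega>)) A"
    unfolding norm using cond_A1_add_infsum_le[OF A1 \<open>0 \<le> a\<close> b_summable] by (simp add: b_def)
  moreover have "\<phi> a \<le> a"
    using cond_A1_le_self[OF A1 \<open>0 \<le> a\<close>] .
  moreover have "infsum (\<lambda>\<omega>. \<phi> (b \<omega>)) A \<le> infsum b A"
    using cond_A1_infsum_comp_le[OF A1 b_summable] by (simp add: b_def)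
  ultimately show ?thesis
    using norm Phi by linarith
qed

end
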